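(* Consider $\dot x=f(x,u)$ with $x\in\mathbb{R}^n$, $f:\mathbb{R}^n\times\mathbb{R}^m\to\mathbb{R}^n$ continuous, $f(0,0)=0$, and suppose $V:\mathbb{R}^n\to\mathbb{R}_{\ge0}$ is a FxT-ISS Lyapunov function for this system. Let $\gamma\in\mathcal{K}^{\mathcal{P}^{-1}}$. Then there exists $\lambda\ge1$ such that $\tilde V(x)=\gamma^\lambda(V(x))=(\gamma(V(x)))^\lambda$ is a FxT-ISS Lyapunov function for the system.
   Context: $\mathcal{K}_\infty$: continuous strictly increasing unbounded $\alpha:\mathbb{R}_{\ge0}\to\mathbb{R}_{\ge0}$ with $\alpha(0)=0$. $\mathcal{K}^{\mathcal{P}}$: the $\alpha\in\mathcal{K}_\infty$ of the form $\sum_{i=1}^nc_is^{p_i}$ with real $c_i\ne0$, $p_i>0$, and $\alpha'(s)>0$ for $s>0$. $\mathcal{K}^{\mathcal{P}^{-1}}$: the $\alpha\in\mathcal{K}_\infty$ with $\alpha^{-1}\in\mathcal{K}^{\mathcal{P}}$. $\mathcal{K}_{\mathrm{FxT}}$: functions $c_1s^{p_1}+c_2s^{p_2}$ with $c_1,c_2>0$, $p_1\in(0,1)$, $p_2>1$. A locally Lipschitz $V:\mathbb{R}^n\to\mathbb{R}_{\ge0}$ is a FxT-ISS Lyapunov function for $\dot x=f(x,u)$ if there exist $\underline\alpha,\overline\alpha,\chi\in\mathcal{K}_\infty$ and $\Psi\in\mathcal{K}_{\mathrm{FxT}}$ with $\underline\alpha(|x|)\le V(x)\le\overline\alpha(|x|)$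 for all $x$ and, for all $x,u$, $V(x)\ge\chi(|u|)\implies DV(x;f(x,u))\le-\Psi(V(x))$, where $DV(x;v)=\limsup_{h\to0^+}\frac{V(x+hv)-V(x)}{h}$. *)

theory Defs
  imports "HOL-Analysis.Analysis"
begin

definition Kinf :: "(real \<Rightarrow> real) set" where
  "Kinf = {\<alpha>. continuous_on {0..} \<alpha> \<and> strict_mono_on {0..} \<alpha> \<and> \<alpha> 0 = 0
              \<and> filterlim \<alpha> at_top at_top}"

definition KP :: "(real \<Rightarrow> real) set" where
  "KP = {\<alpha>. \<alpha> \<in> Kinf \<and>
     (\<exists>(N::nat) (c::nat \<Rightarrow> real) (p::nat \<Rightarrow> real).
        (\<forall>i<N. c i \<noteq> 0 \<and> p i > 0) \<and>
        (\<forall>s\<ge>0. \<alpha> s = (\<Sum>i<N. c i * s powr p i))) \<and>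
     (\<forall>s>0. \<exists>d>0. (\<alpha> has_real_derivative d) (at s))}"

definition KPinv :: "(real \<Rightarrow> real) set" where
  "KPinv = {\<alpha>. \<alpha> \<in> Kinf \<and>
     (\<exists>\<beta>\<in>KP. \<forall>s\<ge>0. \<beta> (\<alpha> s) = s \<and> \<alpha> (\<beta> s) = s)}"

definition KFxT :: "(real \<Rightarrow> real) set" where
  "KFxT = {\<Psi>. \<exists>c1 c2 p1 p2. c1 > 0 \<and> c2 > 0 \<and> 0 < p1 \<and> p1 < 1 \<and> p2 > 1 \<and>
              (\<forall>s\<ge>0. \<Psi> s = c1 * s powr p1 + c2 * s powr p2)}"

definition dini :: "('a::real_normed_vector \<Rightarrow> real) \<Rightarrow> 'a \<Rightarrow> 'a \<Rightarrow> ereal" where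
  "dini V x v = Limsup (at_right 0) (\<lambda>h. ereal ((V (x + h *\<^sub>R v) - V x) / h))"

definition loc_lipschitz :: "('a::metric_space \<Rightarrow> real) \<Rightarrow> bool" where
  "loc_lipschitz V \<longleftrightarrow> (\<forall>x. \<exists>e>0. \<exists>L. L-lipschitz_on (ball x e) V)"

definition FxT_ISS_Lyap ::
  "('a::real_normed_vector \<Rightarrow> 'b::real_normed_vector \<Rightarrow> 'a) \<Rightarrow> ('a \<Rightarrow> real) \<Rightarrow> bool" where
  "FxT_ISS_Lyap f V \<longleftrightarrow> loc_lipschitz V \<and> (\<forall>x. V x \<ge> 0) \<and>
     (\<exists>\<alpha>l \<alpha>u chi \<Psi>. \<alpha>l \<in> Kinf \<and> \<alpha>u \<in> Kinf \<and> chi \<in> Kinf \<and> \<Psi> \<in> KFxT \<and>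
        (\<forall>x. \<alpha>l (norm x) \<le> V x \<and> V x \<le> \<alpha>u (norm x)) \<and>
        (\<forall>x u. V x \<ge> chi (norm u) \<longrightarrow> dini V x (f x u) \<le> ereal (- \<Psi> (V x))))"

end

theory Submission
  imports Defs
begin

(*
  Write \<beta> = \<gamma>\<inverse> as a sum of powers s powr e with smallest exponent a and largest exponent b.
  Then \<beta> s, \<beta>' s behave like s powr a, s powr (a - 1) near 0 and like s powr b, s powr (b - 1)
  near infinity. Put lam = a + 1 and g = \<gamma> powr lam, so g' r = lam s powr a / \<beta>' s with s = \<gamma> r.
  Near 0 this is of order s, hence g is Lipschitz on bounded sets and g \<circ> V stays locally Lipschitz.
  By the chain rule for Dini derivatives, D (g \<circ> V) \<le> - g'(V) \<Psi>(V), and comparing powers of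
  s = \<gamma> (V x) separately for s \<le> 1 and s \<ge> 1 gives
  g'(r) \<Psi>(r) \<ge> c (g(r) powr q1 + g(r) powr q2) with q1 = (1 + a p1) / lam < 1 < q2 = (lam + b (p2 - 1)) / lam.
*)

lemma Kinf_strict_mono: "\<alpha> \<in> Kinf \<Longrightarrow> 0 \<le> s \<Longrightarrow> s < t \<Longrightarrow> \<alpha> s < \<alpha> t"
  unfolding Kinf_def by (auto intro: strict_mono_onD)

lemma Kinf_mono: "\<alpha> \<in> Kinf \<Longrightarrow> 0 \<le> s \<Longrightarrow> s \<le> t \<Longrightarrow> \<alpha> s \<le> \<alpha> t"
  using Kinf_strict_mono[of \<alpha> s t] by (cases "s = t") auto

lemma Kinf_0: "\<alpha> \<in> Kinf \<Longrightarrow> \<alpha> 0 = 0"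
  unfolding Kinf_def by auto

lemma Kinf_pos: "\<alpha> \<in> Kinf \<Longrightarrow> 0 < s \<Longrightarrow> 0 < \<alpha> s"
  using Kinf_strict_mono[of \<alpha> 0 s] Kinf_0[of \<alpha>] by auto

lemma Kinf_nonneg: "\<alpha> \<in> Kinf \<Longrightarrow> 0 \<le> s \<Longrightarrow> 0 \<le> \<alpha> s"
  using Kinf_mono[of \<alpha> 0 s] Kinf_0[of \<alpha>] by auto

lemma Kinf_isCont: "\<alpha> \<in> Kinf \<Longrightarrow> 0 < s \<Longrightarrow> isCont \<alpha> s"
  unfolding Kinf_def using continuous_on_interior[of "{0..}" \<alpha> s] by simp

lemma Kinf_compose: "\<alpha> \<in> Kinf \<Longrightarrow> \<beta> \<in> Kinf \<Longrightarrow> (\<lambda>s. \<beta> (\<alpha> s)) \<in> Kinf"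
proof -
  assume \<alpha>: "\<alpha> \<in> Kinf" and \<beta>: "\<beta> \<in> Kinf"
  have "\<alpha> ` {0..} \<subseteq> {0..}" using Kinf_nonneg[OF \<alpha>] by auto
  then have "continuous_on {0..} (\<lambda>s. \<beta> (\<alpha> s))"
    using \<alpha> \<beta> unfolding Kinf_def by (auto intro: continuous_on_compose2)
  moreover have "strict_mono_on {0..} (\<lambda>s. \<beta> (\<alpha> s))"
    by (rule strict_mono_onI) (use Kinf_strict_mono[OF \<beta>] Kinf_strict_mono[OF \<alpha>] Kinf_nonneg[OF \<alpha>] in auto)
  moreover have "filterlim (\<lambda>s. \<beta> (\<alpha> s)) at_top at_top"
    using \<alpha> \<beta> unfolding Kinf_def by (auto intro: filterlim_compose)
  ultimately show ?thesis using Kinf_0[OF \<alpha>] Kinf_0[OF \<beta>] unfolding Kinf_def by simp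
qed

lemma Kinf_powr:
  assumes \<alpha>: "\<alpha> \<in> Kinf" and p: "0 < p"
  shows "(\<lambda>s. \<alpha> s powr p) \<in> Kinf"
proof -
  have "continuous_on {0..} (\<lambda>s. \<alpha> s powr p)"
    using \<alpha> p Kinf_nonneg[OF \<alpha>] unfolding Kinf_def
    by (intro continuous_on_powr') auto
  moreover have "strict_mono_on {0..} (\<lambda>s. \<alpha> s powr p)"
  proof (rule strict_mono_onI)
    fix r s :: real assume "r \<in> {0..}" "s \<in> {0..}" "r < s"
    then show "\<alpha> r powr p < \<alpha> s powr p"
      using Kinf_strict_mono[OF \<alpha>] Kinf_nonneg[OF \<alpha>] p by (intro powr_less_mono2) auto
  qed
  moreover have "filterlim (\<lambda>s. \<alpha> s powr p) at_top at_top"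
  proof -
    have \<alpha>_top: "filterlim \<alpha> at_top at_top" using \<alpha> unfolding Kinf_def by blast
    have "filterlim (\<lambda>s. p * ln (\<alpha> s)) at_top at_top"
      by (rule filterlim_tendsto_pos_mult_at_top[OF tendsto_const p filterlim_compose[OF ln_at_top \<alpha>_top]])
    then have "filterlim (\<lambda>s. exp (p * ln (\<alpha> s))) at_top at_top"
      by (rule filterlim_compose[OF exp_at_top])
    moreover have "eventually (\<lambda>s. exp (p * ln (\<alpha> s)) = \<alpha> s powr p) at_top"
      using eventually_gt_at_top[of 0]
      by (rule eventually_mono) (metis Kinf_pos[OF \<alpha>] less_irrefl powr_def)
    ultimately show ?thesis using filterlim_cong by fastforce
  qed
  ultimately show ?thesis using Kinf_0[OF \<alpha>] unfolding Kinf_def by simp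
qed

lemma KFxT_0: "\<Psi> \<in> KFxT \<Longrightarrow> \<Psi> 0 = 0"
  unfolding KFxT_def by auto

lemma KFxT_pos: "\<Psi> \<in> KFxT \<Longrightarrow> 0 < s \<Longrightarrow> 0 < \<Psi> s"
  unfolding KFxT_def by (force intro: add_pos_pos)

lemma Kinf_powr_lower_bound_le_1:
  assumes \<alpha>: "\<alpha> \<in> Kinf" and "0 < p" "0 < c"
    and near_0: "eventually (\<lambda>s. c * s powr p \<le> \<alpha> s) (at_right 0)"
  shows "\<exists>k>0. \<forall>s. 0 < s \<and> s \<le> 1 \<longrightarrow> k * s powr p \<le> \<alpha> s"
proof -
  obtain t where t: "0 < t" "\<And>s. 0 < s \<Longrightarrow> s < t \<Longrightarrow> c * s powr p \<le> \<alpha> s"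
    using near_0 unfolding eventually_at_right_field by auto
  define t' where "t' = min (t / 2) 1"
  have t': "0 < t'" "t' < t" "t' \<le> 1" unfolding t'_def using t(1) by auto
  define k where "k = min c (\<alpha> t')"
  have "k * s powr p \<le> \<alpha> s" if s: "0 < s" "s \<le> 1" for s
  proof (cases "s < t'")
    case True
    then have "c * s powr p \<le> \<alpha> s" using t t' s by auto
    moreover have "k * s powr p \<le> c * s powr p" unfolding k_def by (intro mult_right_mono) auto
    ultimately show ?thesis by linarith
  next
    case False
    have "s powr p \<le> 1" using powr_mono2[of p s 1] s \<open>0 < p\<close> by simp
    then have "k * s powr p \<le> k"
      using Kinf_pos[OF \<alpha> t'(1)] \<open>0 < c\<close> unfolding k_def by (intro mult_left_le) auto
    also have "\<dots> \<le> \<alpha> t'" unfolding k_def by simp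
    also have "\<dots> \<le> \<alpha> s" using False t' by (intro Kinf_mono[OF \<alpha>]) auto
    finally show ?thesis .
  qed
  moreover have "0 < k" unfolding k_def using Kinf_pos[OF \<alpha> t'(1)] \<open>0 < c\<close> by simp
  ultimately show ?thesis by blast
qed

lemma Kinf_powr_lower_bound_ge_1:
  assumes \<alpha>: "\<alpha> \<in> Kinf" and "0 < p" "0 < c"
    and near_top: "eventually (\<lambda>s. c * s powr p \<le> \<alpha> s) at_top"
  shows "\<exists>k>0. \<forall>s\<ge>1. k * s powr p \<le> \<alpha> s"
proof -
  obtain R where R: "\<And>s. R \<le> s \<Longrightarrow> c * s powr p \<le> \<alpha> s"
    using near_top unfolding eventually_at_top_linorder by auto
  define R' where "R' = max R 1"
  define k where "k = min c (\<alpha> 1 / R' powr p)"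
  have "k * s powr p \<le> \<alpha> s" if s: "1 \<le> s" for s
  proof (cases "R' \<le> s")
    case True
    then have "c * s powr p \<le> \<alpha> s" using R unfolding R'_def by simp
    moreover have "k * s powr p \<le> c * s powr p" unfolding k_def by (intro mult_right_mono) auto
    ultimately show ?thesis by linarith
  next
    case False
    have "s powr p \<le> R' powr p" using False s \<open>0 < p\<close> by (intro powr_mono2) auto
    then have "k * s powr p \<le> \<alpha> 1 / R' powr p * R' powr p"
      unfolding k_def using Kinf_pos[OF \<alpha>, of 1] \<open>0 < c\<close> by (intro mult_mono) auto
    also have "\<dots> = \<alpha> 1" unfolding R'_def by simp
    also have "\<dots> \<le> \<alpha> s" using s by (intro Kinf_mono[OF \<alpha>]) auto
    finally show ?thesis .
  qed
  moreover have "0 < k" unfolding k_def R'_def using Kinf_pos[OF \<alpha>, of 1] \<open>0 < c\<close> by simp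
  ultimately show ?thesis by blast
qed

lemma sum_powr_dominant_term:
  fixes E :: "real set" and D h :: "real \<Rightarrow> real" and F :: "real filter"
  assumes "finite E" "a \<in> E"
    and small: "\<And>e. e \<in> E - {a} \<Longrightarrow> ((\<lambda>s. s powr (h e - h a)) \<longlongrightarrow> 0) F"
    and pos: "eventually (\<lambda>s. 0 < s) F" and "0 < \<epsilon>"
  shows "eventually (\<lambda>s. \<bar>(\<Sum>e\<in>E. D e * s powr h e) - D a * s powr h a\<bar> \<le> \<epsilon> * s powr h a) F"
proof -
  let ?T = "\<lambda>s. \<Sum>e\<in>E-{a}. \<bar>D e\<bar> * s powr (h e - h a)"
  have "(?T \<longlongrightarrow> (\<Sum>e\<in>E-{a}. \<bar>D e\<bar> * 0)) F"
    by (intro tendsto_sum tendsto_mult tendsto_const small)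
  then have "eventually (\<lambda>s. ?T s < \<epsilon>) F"
    using \<open>0 < \<epsilon>\<close> by (intro order_tendstoD) simp_all
  with pos show ?thesis
  proof eventually_elim
    case (elim s)
    have "(\<Sum>e\<in>E. D e * s powr h e) - D a * s powr h a = (\<Sum>e\<in>E-{a}. D e * s powr h e)"
      using assms(1,2) by (simp add: sum.remove)
    also have "\<bar>\<dots>\<bar> \<le> (\<Sum>e\<in>E-{a}. \<bar>D e * s powr h e\<bar>)" by (rule sum_abs)
    also have "\<dots> = s powr h a * ?T s"
      using elim by (simp add: sum_distrib_left abs_mult powr_diff)
    also have "\<dots> \<le> s powr h a * \<epsilon>" using elim by (intro mult_left_mono) auto
    finally show ?case by (simp add: mult.commute)
  qed
qed

lemma sum_powr_dominant_lower_bound: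
  fixes E :: "real set" and D h \<phi> :: "real \<Rightarrow> real" and F :: "real filter"
  assumes "finite E" "a \<in> E" "D a \<noteq> 0" "F \<noteq> bot"
    and small: "\<And>e. e \<in> E - {a} \<Longrightarrow> ((\<lambda>s. s powr (h e - h a)) \<longlongrightarrow> 0) F"
    and pos: "eventually (\<lambda>s. 0 < s) F"
    and \<phi>: "eventually (\<lambda>s. \<phi> s = (\<Sum>e\<in>E. D e * s powr h e)) F" "eventually (\<lambda>s. 0 < \<phi> s) F"
  shows "\<exists>c>0. eventually (\<lambda>s. c * s powr h a \<le> \<phi> s) F"
proof -
  have "eventually (\<lambda>s. \<bar>(\<Sum>e\<in>E. D e * s powr h e) - D a * s powr h a\<bar> \<le> \<bar>D a\<bar> / 2 * s powr h a) F"
    using assms by (intro sum_powr_dominant_term) auto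
  with \<phi>(1) have close: "eventually (\<lambda>s. \<bar>\<phi> s - D a * s powr h a\<bar> \<le> \<bar>D a\<bar> / 2 * s powr h a) F"
    by eventually_elim simp
  have "0 < D a"
  proof (rule ccontr)
    assume "\<not> 0 < D a"
    with \<open>D a \<noteq> 0\<close> have "D a < 0" by simp
    have "eventually (\<lambda>s. False) F"
      using close \<phi>(2) pos
    proof eventually_elim
      case (elim s)
      then have "\<phi> s \<le> D a / 2 * s powr h a"
        using \<open>D a < 0\<close> by (auto simp: abs_le_iff field_simps)
      also have "\<dots> < 0" using \<open>D a < 0\<close> elim by (simp add: mult_neg_pos)
      finally show False using elim by simp
    qed
    with \<open>F \<noteq> bot\<close> show False by (simp add: eventually_False)
  qed
  moreover have "eventually (\<lambda>s. D a / 2 * s powr h a \<le> \<phi> s) F"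
    using close
  proof eventually_elim
    case (elim s)
    then have "D a * s powr h a - \<phi> s \<le> D a / 2 * s powr h a"
      using \<open>0 < D a\<close> abs_le_D2 by fastforce
    then show ?case by (simp add: field_simps)
  qed
  ultimately show ?thesis by (intro exI[of _ "D a / 2"]) auto
qed

lemma power_sum_lower_bound_at_right_0:
  fixes E :: "real set" and D h \<phi> :: "real \<Rightarrow> real"
  assumes "finite E" "a \<in> E" "D a \<noteq> 0" and smallest: "\<And>e. e \<in> E \<Longrightarrow> e \<noteq> a \<Longrightarrow> h a < h e"
    and \<phi>: "\<And>s. 0 < s \<Longrightarrow> \<phi> s = (\<Sum>e\<in>E. D e * s powr h e)" "\<And>s. 0 < s \<Longrightarrow> 0 < \<phi> s"
  shows "\<exists>c>0. eventually (\<lambda>s. c * s powr h a \<le> \<phi> s) (at_right 0)"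
proof (rule sum_powr_dominant_lower_bound[where E = E and D = D and h = h])
  show "((\<lambda>s. s powr (h e - h a)) \<longlongrightarrow> 0) (at_right 0)" if "e \<in> E - {a}" for e
    using smallest[of e] that
    by (intro tendsto_zero_powrI) (auto intro!: tendsto_ident_at eventually_at_rightI[of 0 1])
  show pos: "eventually (\<lambda>s. 0 < s) (at_right (0::real))"
    by (simp add: eventually_at_right_less)
  show "eventually (\<lambda>s. \<phi> s = (\<Sum>e\<in>E. D e * s powr h e)) (at_right 0)"
    using pos by (rule eventually_mono) (rule \<phi>(1))
  show "eventually (\<lambda>s. 0 < \<phi> s) (at_right 0)"
    using pos by (rule eventually_mono) (rule \<phi>(2))
qed (use assms in auto)

lemma power_sum_lower_bound_at_top:
  fixes E :: "real set" and D h \<phi> :: "real \<Rightarrow> real"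
  assumes "finite E" "b \<in> E" "D b \<noteq> 0" and largest: "\<And>e. e \<in> E \<Longrightarrow> e \<noteq> b \<Longrightarrow> h e < h b"
    and \<phi>: "\<And>s. 0 < s \<Longrightarrow> \<phi> s = (\<Sum>e\<in>E. D e * s powr h e)" "\<And>s. 0 < s \<Longrightarrow> 0 < \<phi> s"
  shows "\<exists>c>0. eventually (\<lambda>s. c * s powr h b \<le> \<phi> s) at_top"
proof (rule sum_powr_dominant_lower_bound[where E = E and D = D and h = h])
  show "((\<lambda>s. s powr (h e - h b)) \<longlongrightarrow> 0) at_top" if "e \<in> E - {b}" for e
    using largest[of e] that by (intro tendsto_neg_powr filterlim_ident) auto
  show pos: "eventually (\<lambda>s. 0 < s) (at_top :: real filter)"
    by (rule eventually_gt_at_top)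
  show "eventually (\<lambda>s. \<phi> s = (\<Sum>e\<in>E. D e * s powr h e)) at_top"
    using pos by (rule eventually_mono) (rule \<phi>(1))
  show "eventually (\<lambda>s. 0 < \<phi> s) at_top"
    using pos by (rule eventually_mono) (rule \<phi>(2))
qed (use assms in auto)

lemma powr_le_powr_add_extremes:
  fixes s a b e :: real
  assumes "0 < s" "a \<le> e" "e \<le> b"
  shows "s powr e \<le> s powr a + s powr b"
proof (cases "s \<le> 1")
  case True
  then have "s powr e \<le> s powr a" using assms by (intro powr_mono') auto
  then show ?thesis by (simp add: add_increasing2)
next
  case False
  then have "s powr e \<le> s powr b" using assms by (intro powr_mono) auto
  then show ?thesis by (simp add: add_increasing)
qed

lemma sum_powr_le_extremes:
  fixes E :: "real set" and D h :: "real \<Rightarrow> real"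
  assumes "0 < s" "\<And>e. e \<in> E \<Longrightarrow> a \<le> h e \<and> h e \<le> b"
  shows "(\<Sum>e\<in>E. D e * s powr h e) \<le> (\<Sum>e\<in>E. \<bar>D e\<bar>) * (s powr a + s powr b)"
  unfolding sum_distrib_right
proof (rule sum_mono)
  fix e assume "e \<in> E"
  have "D e * s powr h e \<le> \<bar>D e\<bar> * s powr h e" by (intro mult_right_mono) auto
  also have "\<dots> \<le> \<bar>D e\<bar> * (s powr a + s powr b)"
    using assms \<open>e \<in> E\<close> by (intro mult_left_mono powr_le_powr_add_extremes) auto
  finally show "D e * s powr h e \<le> \<bar>D e\<bar> * (s powr a + s powr b)" .
qed

lemma KP_power_sum_form:
  assumes "\<beta> \<in> KP"
  obtains E C where "finite E" "E \<noteq> {}" "\<And>e. e \<in> E \<Longrightarrow> 0 < e \<and> C e \<noteq> 0"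
    "\<And>s. 0 \<le> s \<Longrightarrow> \<beta> s = (\<Sum>e\<in>E. C e * s powr e)"
proof -
  from assms obtain N :: nat and c p :: "nat \<Rightarrow> real"
    where \<beta>: "\<beta> \<in> Kinf" and cp: "\<forall>i<N. c i \<noteq> 0 \<and> p i > 0"
      and rep: "\<forall>s\<ge>0. \<beta> s = (\<Sum>i<N. c i * s powr p i)"
    unfolding KP_def mem_Collect_eq by blast
  define C where "C e = (\<Sum>i\<in>{i\<in>{..<N}. p i = e}. c i)" for e
  define E where "E = {e \<in> p ` {..<N}. C e \<noteq> 0}"
  have collect: "(\<Sum>i<N. c i * s powr p i) = (\<Sum>e\<in>E. C e * s powr e)" for s
  proof -
    have "(\<Sum>i<N. c i * s powr p i) = (\<Sum>e\<in>p ` {..<N}. \<Sum>i\<in>{i\<in>{..<N}. p i = e}. c i * s powr p i)"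
      by (rule sum.image_gen) simp
    also have "\<dots> = (\<Sum>e\<in>p ` {..<N}. C e * s powr e)"
      unfolding C_def by (intro sum.cong refl) (simp add: sum_distrib_right)
    also have "\<dots> = (\<Sum>e\<in>E. C e * s powr e)"
      by (rule sum.mono_neutral_right) (auto simp: E_def)
    finally show ?thesis .
  qed
  show ?thesis
  proof (rule that)
    show "finite E" unfolding E_def by simp
    show "0 < e \<and> C e \<noteq> 0" if "e \<in> E" for e using that cp unfolding E_def by auto
    show "\<beta> s = (\<Sum>e\<in>E. C e * s powr e)" if "0 \<le> s" for s using that rep collect by simp
    then show "E \<noteq> {}" using Kinf_pos[OF \<beta>, of 1] by force
  qed
qed

lemma power_sum_has_real_derivative:
  fixes E :: "real set" and C :: "real \<Rightarrow> real"
  assumes "0 < s"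
  shows "((\<lambda>s. \<Sum>e\<in>E. C e * s powr e) has_real_derivative (\<Sum>e\<in>E. (C e * e) * s powr (e - 1))) (at s)"
proof (rule DERIV_sum)
  fix e
  show "((\<lambda>s. C e * s powr e) has_real_derivative C e * e * s powr (e - 1)) (at s)"
    using DERIV_cmult[OF has_real_derivative_powr[OF assms, of e], of "C e"] by (simp add: mult.assoc)
qed

lemma Kinf_power_sum_lower_bounds:
  fixes E :: "real set" and C \<alpha> :: "real \<Rightarrow> real"
  assumes \<alpha>: "\<alpha> \<in> Kinf" and E: "finite E" "E \<noteq> {}" and EC: "\<And>e. e \<in> E \<Longrightarrow> 0 < e \<and> C e \<noteq> 0"
    and rep: "\<And>s. 0 \<le> s \<Longrightarrow> \<alpha> s = (\<Sum>e\<in>E. C e * s powr e)"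
  shows "\<exists>k>0. (\<forall>s. 0 < s \<and> s \<le> 1 \<longrightarrow> k * s powr Min E \<le> \<alpha> s) \<and> (\<forall>s\<ge>1. k * s powr Max E \<le> \<alpha> s)"
proof -
  have extremes: "Min E \<in> E" "Max E \<in> E" "\<And>e. e \<in> E \<Longrightarrow> Min E \<le> e \<and> e \<le> Max E"
    using E by auto
  have rep': "\<alpha> s = (\<Sum>e\<in>E. C e * s powr id e)" if "0 < s" for s
    using rep[of s] that by simp
  have "\<exists>c>0. eventually (\<lambda>s. c * s powr id (Min E) \<le> \<alpha> s) (at_right 0)"
    by (rule power_sum_lower_bound_at_right_0[where D = C])
      (use E EC extremes rep' Kinf_pos[OF \<alpha>] in \<open>auto simp: order.strict_iff_order\<close>)
  then obtain c1 where c1: "0 < c1" "eventually (\<lambda>s. c1 * s powr Min E \<le> \<alpha> s) (at_right 0)"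
    by auto
  obtain k1 where k1: "0 < k1" "\<forall>s. 0 < s \<and> s \<le> 1 \<longrightarrow> k1 * s powr Min E \<le> \<alpha> s"
    using Kinf_powr_lower_bound_le_1[OF \<alpha> _ c1] EC[OF extremes(1)] by blast
  have "\<exists>c>0. eventually (\<lambda>s. c * s powr id (Max E) \<le> \<alpha> s) at_top"
    by (rule power_sum_lower_bound_at_top[where D = C])
      (use E EC extremes rep' Kinf_pos[OF \<alpha>] in \<open>auto simp: order.strict_iff_order\<close>)
  then obtain c2 where c2: "0 < c2" "eventually (\<lambda>s. c2 * s powr Max E \<le> \<alpha> s) at_top"
    by auto
  obtain k2 where k2: "0 < k2" "\<forall>s\<ge>1. k2 * s powr Max E \<le> \<alpha> s"
    using Kinf_powr_lower_bound_ge_1[OF \<alpha> _ c2] EC[OF extremes(2)] by blast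
  have "min k1 k2 * s powr Min E \<le> \<alpha> s" if "0 < s" "s \<le> 1" for s
  proof -
    have "min k1 k2 * s powr Min E \<le> k1 * s powr Min E" by (intro mult_right_mono) auto
    also have "\<dots> \<le> \<alpha> s" using k1(2) that by blast
    finally show ?thesis .
  qed
  moreover have "min k1 k2 * s powr Max E \<le> \<alpha> s" if "1 \<le> s" for s
  proof -
    have "min k1 k2 * s powr Max E \<le> k2 * s powr Max E" by (intro mult_right_mono) auto
    also have "\<dots> \<le> \<alpha> s" using k2(2) that by blast
    finally show ?thesis .
  qed
  ultimately show ?thesis using k1(1) k2(1) by (intro exI[of _ "min k1 k2"]) auto
qed

lemma power_sum_deriv_lower_bound:
  fixes E :: "real set" and C :: "real \<Rightarrow> real"
  assumes E: "finite E" "E \<noteq> {}" and EC: "\<And>e. e \<in> E \<Longrightarrow> 0 < e \<and> C e \<noteq> 0"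
    and pos: "\<And>s. 0 < s \<Longrightarrow> 0 < (\<Sum>e\<in>E. (C e * e) * s powr (e - 1))"
  shows "\<exists>k \<delta>. 0 < k \<and> 0 < \<delta> \<and> \<delta> \<le> 1 \<and>
    (\<forall>s. 0 < s \<and> s \<le> \<delta> \<longrightarrow> k * s powr (Min E - 1) \<le> (\<Sum>e\<in>E. (C e * e) * s powr (e - 1)))"
proof -
  have "Min E \<in> E" "\<And>e. e \<in> E \<Longrightarrow> Min E \<le> e" using E by auto
  have "\<exists>c>0. eventually (\<lambda>s. c * s powr (Min E - 1) \<le> (\<Sum>e\<in>E. (C e * e) * s powr (e - 1))) (at_right 0)"
  proof (rule power_sum_lower_bound_at_right_0[where h = "\<lambda>e. e - 1" and D = "\<lambda>e. C e * e"])
    show "C (Min E) * Min E \<noteq> 0" using EC[OF \<open>Min E \<in> E\<close>] by simp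
    show "Min E - 1 < e - 1" if "e \<in> E" "e \<noteq> Min E" for e
      using \<open>e \<in> E \<Longrightarrow> Min E \<le> e\<close> that by force
  qed (use E \<open>Min E \<in> E\<close> pos in simp_all)
  then obtain c where "0 < c"
    "eventually (\<lambda>s. c * s powr (Min E - 1) \<le> (\<Sum>e\<in>E. (C e * e) * s powr (e - 1))) (at_right 0)"
    by blast
  moreover from this(2) obtain t where "0 < t"
    "\<And>s. 0 < s \<Longrightarrow> s < t \<Longrightarrow> c * s powr (Min E - 1) \<le> (\<Sum>e\<in>E. (C e * e) * s powr (e - 1))"
    unfolding eventually_at_right_field by auto
  ultimately show ?thesis by (intro exI[of _ c] exI[of _ "min (t / 2) 1"]) auto
qed

(* a and b are the smallest and largest exponents of the power sum \<beta>. *)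
locale KP_bounds =
  fixes \<beta> d\<beta> :: "real \<Rightarrow> real" and a b A k \<delta> :: real
  assumes exponents: "0 < a" "a \<le> b"
    and constants: "0 < A" "0 < k" "0 < \<delta>" "\<delta> \<le> 1"
    and has_deriv: "\<And>s. 0 < s \<Longrightarrow> (\<beta> has_real_derivative d\<beta> s) (at s)"
    and deriv_pos: "\<And>s. 0 < s \<Longrightarrow> 0 < d\<beta> s"
    and deriv_cont: "continuous_on {0<..} d\<beta>"
    and deriv_upper: "\<And>s. 0 < s \<Longrightarrow> d\<beta> s \<le> A * (s powr (a - 1) + s powr (b - 1))"
    and deriv_lower: "\<And>s. 0 < s \<Longrightarrow> s \<le> \<delta> \<Longrightarrow> k * s powr (a - 1) \<le> d\<beta> s"
    and lower_le_1: "\<And>s. 0 < s \<Longrightarrow> s \<le> 1 \<Longrightarrow> k * s powr a \<le> \<beta> s"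
    and lower_ge_1: "\<And>s. 1 \<le> s \<Longrightarrow> k * s powr b \<le> \<beta> s"

lemma KP_bounds_exist:
  assumes "\<beta> \<in> KP"
  shows "\<exists>d\<beta> a b A k \<delta>. KP_bounds \<beta> d\<beta> a b A k \<delta>"
proof -
  have \<beta>: "\<beta> \<in> Kinf" using assms unfolding KP_def by blast
  obtain E C where E: "finite E" "E \<noteq> {}" and EC: "\<And>e. e \<in> E \<Longrightarrow> 0 < e \<and> C e \<noteq> 0"
    and rep: "\<And>s. 0 \<le> s \<Longrightarrow> \<beta> s = (\<Sum>e\<in>E. C e * s powr e)"
    using KP_power_sum_form[OF assms] by blast
  define d\<beta> where "d\<beta> s = (\<Sum>e\<in>E. (C e * e) * s powr (e - 1))" for s
  have has_deriv: "(\<beta> has_real_derivative d\<beta> s) (at s)" if "0 < s" for s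
    using power_sum_has_real_derivative[OF that, of C E] unfolding d\<beta>_def[symmetric]
    by (rule has_field_derivative_transform_within_open[where S = "{0<..}"]) (use that rep in auto)
  have deriv_pos: "0 < d\<beta> s" if "0 < s" for s
  proof -
    obtain d where "0 < d" "(\<beta> has_real_derivative d) (at s)"
      using assms \<open>0 < s\<close> unfolding KP_def by blast
    with has_deriv[OF \<open>0 < s\<close>] show ?thesis using DERIV_unique by metis
  qed
  obtain k1 where k1: "0 < k1" "\<And>s. 0 < s \<Longrightarrow> s \<le> 1 \<Longrightarrow> k1 * s powr Min E \<le> \<beta> s"
    "\<And>s. 1 \<le> s \<Longrightarrow> k1 * s powr Max E \<le> \<beta> s"
    using Kinf_power_sum_lower_bounds[OF \<beta> E EC rep] by blast
  obtain k2 \<delta> where k2: "0 < k2" "0 < \<delta>" "\<delta> \<le> 1"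
    "\<And>s. 0 < s \<Longrightarrow> s \<le> \<delta> \<Longrightarrow> k2 * s powr (Min E - 1) \<le> d\<beta> s"
    using power_sum_deriv_lower_bound[OF E EC] deriv_pos unfolding d\<beta>_def by blast
  have k_le: "min k1 k2 * x \<le> k' * x" if "k' \<in> {k1, k2}" "0 \<le> x" for k' x
    using that by (intro mult_right_mono) auto
  have "KP_bounds \<beta> d\<beta> (Min E) (Max E) (\<Sum>e\<in>E. \<bar>C e * e\<bar>) (min k1 k2) \<delta>"
  proof
    show "0 < Min E" "Min E \<le> Max E" using E EC by auto
    show "0 < (\<Sum>e\<in>E. \<bar>C e * e\<bar>)" by (rule sum_pos) (use E EC in auto)
    show "0 < min k1 k2" "0 < \<delta>" "\<delta> \<le> 1" using k1 k2 by auto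
    show "continuous_on {0<..} d\<beta>" unfolding d\<beta>_def by (intro continuous_intros) auto
    fix s :: real
    show "0 < s \<Longrightarrow> (\<beta> has_real_derivative d\<beta> s) (at s)" "0 < s \<Longrightarrow> 0 < d\<beta> s"
      by (fact has_deriv deriv_pos)+
    show "0 < s \<Longrightarrow> d\<beta> s \<le> (\<Sum>e\<in>E. \<bar>C e * e\<bar>) * (s powr (Min E - 1) + s powr (Max E - 1))"
      unfolding d\<beta>_def using E by (intro sum_powr_le_extremes) auto
    show "0 < s \<Longrightarrow> s \<le> 1 \<Longrightarrow> min k1 k2 * s powr Min E \<le> \<beta> s"
      by (rule order.trans[OF k_le k1(2)]) auto
    show "1 \<le> s \<Longrightarrow> min k1 k2 * s powr Max E \<le> \<beta> s"
      by (rule order.trans[OF k_le k1(3)]) auto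
    show "0 < s \<Longrightarrow> s \<le> \<delta> \<Longrightarrow> min k1 k2 * s powr (Min E - 1) \<le> d\<beta> s"
      by (rule order.trans[OF k_le k2(4)]) auto
  qed
  then show ?thesis by blast
qed

lemma dini_zero_direction: "dini V x 0 = 0"
  unfolding dini_def by (simp add: Limsup_const zero_ereal_def)

lemma loc_lipschitz_isCont:
  assumes "loc_lipschitz V"
  shows "isCont V x"
proof -
  obtain e L where "0 < e" "L-lipschitz_on (ball x e) V"
    using assms unfolding loc_lipschitz_def by blast
  then show ?thesis
    using continuous_on_interior[OF lipschitz_on_continuous_on] by fastforce
qed

lemma loc_lipschitz_compose:
  fixes V :: "'a::metric_space \<Rightarrow> real"
  assumes V: "loc_lipschitz V" "\<And>x. 0 \<le> V x"
    and g: "\<And>M. \<exists>L. L-lipschitz_on {0..M} g"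
  shows "loc_lipschitz (\<lambda>x. g (V x))"
  unfolding loc_lipschitz_def
proof
  fix x
  obtain e L where e: "0 < e" and L: "L-lipschitz_on (ball x e) V"
    using V(1) unfolding loc_lipschitz_def by blast
  obtain L' where L': "L'-lipschitz_on {0..V x + L * e} g" using g by blast
  have "V ` ball x e \<subseteq> {0..V x + L * e}"
  proof safe
    fix y assume "y \<in> ball x e"
    then have "dist (V y) (V x) \<le> L * dist y x"
      using L e by (intro lipschitz_onD) auto
    also have "\<dots> \<le> L * e"
      using \<open>y \<in> ball x e\<close> lipschitz_on_nonneg[OF L] by (intro mult_left_mono) (auto simp: dist_commute)
    finally show "V y \<in> {0..V x + L * e}" using V(2)[of y] by (auto simp: dist_real_def)
  qed
  then have "(L' * L)-lipschitz_on (ball x e) (\<lambda>y. g (V y))"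
    by (intro lipschitz_on_compose2[OF L] lipschitz_on_subset[OF L'])
  with e show "\<exists>e>0. \<exists>L. L-lipschitz_on (ball x e) (\<lambda>y. g (V y))" by blast
qed

lemma lipschitz_on_Icc_deriv_bound:
  fixes g g' :: "real \<Rightarrow> real"
  assumes "a < b" and cont: "continuous_on {a..b} g"
    and deriv: "\<And>x. a < x \<Longrightarrow> x < b \<Longrightarrow> (g has_real_derivative g' x) (at x)"
    and bound: "\<And>x. a < x \<Longrightarrow> x < b \<Longrightarrow> \<bar>g' x\<bar> \<le> L"
  shows "L-lipschitz_on {a..b} g"
proof -
  have "0 \<le> L" using bound[of "(a + b) / 2"] \<open>a < b\<close> by auto
  have "L-lipschitz_on {a<..<b} g"
  proof (rule bounded_derivative_imp_lipschitz)
    fix x assume x: "x \<in> {a<..<b}"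
    show "(g has_derivative (*) (g' x)) (at x within {a<..<b})"
      using deriv[of x] x by (simp add: has_field_derivative_def has_derivative_at_withinI)
    show "onorm ((*) (g' x)) \<le> L"
      using bound[of x] x \<open>0 \<le> L\<close> by (intro onorm_bound) (auto simp: abs_mult mult_right_mono)
  qed (use \<open>0 \<le> L\<close> in auto)
  then show ?thesis
    using lipschitz_on_closure[of L "{a<..<b}" g] cont closure_greaterThanLessThan[OF \<open>a < b\<close>] by simp
qed

lemma dini_comp_le_approx:
  fixes V :: "'a::real_normed_vector \<Rightarrow> real"
  assumes cont: "isCont V x" and der: "(g has_real_derivative d) (at (V x))"
    and DV: "dini V x v < ereal M" and "M < 0" and \<eta>: "0 < \<eta>" "\<eta> < d"
  shows "dini (\<lambda>y. g (V y)) x v \<le> ereal ((d - \<eta>) * M)"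
proof -
  have ev_quot: "eventually (\<lambda>h. ereal ((V (x + h *\<^sub>R v) - V x) / h) < ereal M) (at_right 0)"
    using DV unfolding dini_def by (rule Limsup_lessD)
  have "((\<lambda>y. (g y - g (V x)) / (y - V x)) \<longlongrightarrow> d) (at (V x))"
    using der by (simp add: has_field_derivative_iff)
  from LIM_D[OF this \<eta>(1)] obtain \<delta> where \<delta>: "0 < \<delta>"
    "\<And>y. y \<noteq> V x \<and> norm (y - V x) < \<delta> \<Longrightarrow> norm ((g y - g (V x)) / (y - V x) - d) < \<eta>"
    by blast
  have "((\<lambda>h. x + h *\<^sub>R v) \<longlongrightarrow> x + 0 *\<^sub>R v) (at_right (0::real))"
    by (intro tendsto_intros tendsto_ident_at)
  then have "((\<lambda>h. x + h *\<^sub>R v) \<longlongrightarrow> x) (at_right (0::real))" by simp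
  then have "((\<lambda>h. V (x + h *\<^sub>R v)) \<longlongrightarrow> V x) (at_right (0::real))"
    by (rule isCont_tendsto_compose[OF cont])
  then have ev_near: "eventually (\<lambda>h. dist (V (x + h *\<^sub>R v)) (V x) < \<delta>) (at_right 0)"
    using \<delta>(1) by (auto dest: tendstoD)
  have ev_pos: "eventually (\<lambda>h::real. 0 < h) (at_right 0)"
    by (simp add: eventually_at_right_less)
  have "eventually (\<lambda>h. ereal ((g (V (x + h *\<^sub>R v)) - g (V x)) / h) \<le> ereal ((d - \<eta>) * M)) (at_right 0)"
    using ev_quot ev_near ev_pos
  proof eventually_elim
    case (elim h)
    define y where "y = V (x + h *\<^sub>R v)"
    have quot: "(y - V x) / h < M" using elim(1) by (simp add: y_def)
    with \<open>M < 0\<close> have "y \<noteq> V x" by auto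
    then have "norm ((g y - g (V x)) / (y - V x) - d) < \<eta>"
      using \<delta>(2)[of y] elim(2) by (simp add: y_def dist_norm)
    then have slope: "d - \<eta> < (g y - g (V x)) / (y - V x)" by simp
    have "(g y - g (V x)) / h = ((g y - g (V x)) / (y - V x)) * ((y - V x) / h)"
      using \<open>y \<noteq> V x\<close> by simp
    also have "\<dots> \<le> ((g y - g (V x)) / (y - V x)) * M"
      using quot slope \<eta> by (intro mult_left_mono) auto
    also have "\<dots> \<le> (d - \<eta>) * M"
      using slope \<open>M < 0\<close> by (intro mult_right_mono_neg) auto
    finally show ?case by (simp add: y_def)
  qed
  then show ?thesis unfolding dini_def by (rule Limsup_bounded)
qed

lemma dini_comp_le:
  fixes V :: "'a::real_normed_vector \<Rightarrow> real"
  assumes cont: "isCont V x" and der: "(g has_real_derivative d) (at (V x))" and "0 < d"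
    and "L < 0" and DV: "dini V x v \<le> ereal L"
  shows "dini (\<lambda>y. g (V y)) x v \<le> ereal (d * L)"
proof (rule ereal_le_epsilon2)
  fix e :: real assume "0 < e"
  define t where "t = min (e / (2 * d)) (- L / 2)"
  define \<eta> where "\<eta> = min (d / 2) (e / (2 * (- L)))"
  have t: "0 < t" "t \<le> e / (2 * d)" "t < - L"
    unfolding t_def using \<open>0 < e\<close> \<open>0 < d\<close> \<open>L < 0\<close> by auto
  have \<eta>: "0 < \<eta>" "\<eta> < d" "\<eta> \<le> e / (2 * (- L))"
    unfolding \<eta>_def using \<open>0 < e\<close> \<open>0 < d\<close> \<open>L < 0\<close> by (auto simp: divide_pos_neg)
  have "dini V x v < ereal (L + t)" using DV t(1) by (simp add: le_less_trans)
  then have "dini (\<lambda>y. g (V y)) x v \<le> ereal ((d - \<eta>) * (L + t))"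
    using t \<eta> by (intro dini_comp_le_approx[OF cont der]) auto
  also have "(d - \<eta>) * (L + t) \<le> d * L + e"
  proof -
    have "d * t \<le> e / 2" using t(2) \<open>0 < d\<close> by (simp add: field_simps)
    moreover have "\<eta> * (- L) \<le> e / 2" using \<eta>(3) \<open>L < 0\<close> by (simp add: field_simps)
    moreover have "0 \<le> \<eta> * t" using \<eta> t by simp
    moreover have "(d - \<eta>) * (L + t) = d * L + d * t + \<eta> * (- L) - \<eta> * t" by (simp add: algebra_simps)
    ultimately show ?thesis by linarith
  qed
  finally show "dini (\<lambda>y. g (V y)) x v \<le> ereal (d * L) + ereal e" by simp
qed

lemma FxT_ISS_Lyap_compose:
  fixes f :: "'a::real_normed_vector \<Rightarrow> 'b::real_normed_vector \<Rightarrow> 'a"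
  assumes V: "FxT_ISS_Lyap f V" and f0: "f 0 0 = 0" and g: "g \<in> Kinf"
    and g_lipschitz: "\<And>M. \<exists>L. L-lipschitz_on {0..M} g"
    and g_deriv: "\<And>r. 0 < r \<Longrightarrow> (g has_real_derivative g' r) (at r)"
    and g'_pos: "\<And>r. 0 < r \<Longrightarrow> 0 < g' r"
    and decay: "\<And>\<Psi>. \<Psi> \<in> KFxT \<Longrightarrow> \<exists>\<Psi>'\<in>KFxT. \<forall>r>0. \<Psi>' (g r) \<le> g' r * \<Psi> r"
  shows "FxT_ISS_Lyap f (\<lambda>x. g (V x))"
proof -
  from V obtain \<alpha>l \<alpha>u chi \<Psi> where V_lip: "loc_lipschitz V" and V_nonneg: "\<And>x. 0 \<le> V x"
    and K: "\<alpha>l \<in> Kinf" "\<alpha>u \<in> Kinf" "chi \<in> Kinf" "\<Psi> \<in> KFxT"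
    and bounds: "\<And>x. \<alpha>l (norm x) \<le> V x \<and> V x \<le> \<alpha>u (norm x)"
    and decrease: "\<And>x u. chi (norm u) \<le> V x \<Longrightarrow> dini V x (f x u) \<le> ereal (- \<Psi> (V x))"
    unfolding FxT_ISS_Lyap_def by blast
  obtain \<Psi>' where \<Psi>': "\<Psi>' \<in> KFxT" "\<And>r. 0 < r \<Longrightarrow> \<Psi>' (g r) \<le> g' r * \<Psi> r"
    using decay[OF K(4)] by blast
  have "dini (\<lambda>x. g (V x)) x (f x u) \<le> ereal (- \<Psi>' (g (V x)))"
    if "g (chi (norm u)) \<le> g (V x)" for x u
  proof -
    have "chi (norm u) \<le> V x"
      using that Kinf_strict_mono[OF g, of "V x" "chi (norm u)"] V_nonneg by force
    show ?thesis
    proof (cases "V x = 0")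
      case True
      (* The bounds force x = 0 and u = 0, so the direction f x u vanishes. *)
      then have "x = 0" using bounds[of x] Kinf_pos[OF K(1), of "norm x"] by force
      moreover have "u = 0"
        using \<open>chi (norm u) \<le> V x\<close> True Kinf_pos[OF K(3), of "norm u"] by force
      ultimately show ?thesis
        using True f0 Kinf_0[OF g] KFxT_0[OF \<Psi>'(1)] by (simp add: dini_zero_direction)
    next
      case False
      then have "0 < V x" using V_nonneg[of x] by simp
      have "dini (\<lambda>x. g (V x)) x (f x u) \<le> ereal (g' (V x) * - \<Psi> (V x))"
        using decrease[OF \<open>chi (norm u) \<le> V x\<close>] KFxT_pos[OF K(4) \<open>0 < V x\<close>]
        by (intro dini_comp_le loc_lipschitz_isCont[OF V_lip] g_deriv g'_pos \<open>0 < V x\<close>) auto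
      also have "\<dots> \<le> ereal (- \<Psi>' (g (V x)))" using \<Psi>'(2)[OF \<open>0 < V x\<close>] by simp
      finally show ?thesis .
    qed
  qed
  moreover have "\<alpha> \<in> Kinf \<Longrightarrow> (\<lambda>s. g (\<alpha> s)) \<in> Kinf" for \<alpha> using Kinf_compose[OF _ g] .
  moreover have "g (\<alpha>l (norm x)) \<le> g (V x) \<and> g (V x) \<le> g (\<alpha>u (norm x))" for x
    using bounds[of x] Kinf_mono[OF g] Kinf_nonneg[OF K(1)] V_nonneg by simp
  ultimately show ?thesis
    unfolding FxT_ISS_Lyap_def
    using loc_lipschitz_compose[OF V_lip V_nonneg g_lipschitz] Kinf_nonneg[OF g] V_nonneg K \<Psi>'(1)
    by blast
qed

lemma power_gain_lower_bound:
  fixes s r d A k c p lam m \<Psi>r :: real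
  assumes "0 < s" "0 < A" "0 < k" "0 < c" "0 < p" "0 < lam" "0 < d"
    and d: "d \<le> 2 * A * s powr (m - 1)" and r: "k * s powr m \<le> r" and \<Psi>r: "c * r powr p \<le> \<Psi>r"
  shows "lam * c * k powr p / (2 * A) * s powr (lam + m * (p - 1)) \<le> lam * s powr (lam - 1) / d * \<Psi>r"
proof -
  have "(k * s powr m) powr p \<le> r powr p"
    using r assms by (intro powr_mono2) auto
  then have "k powr p * s powr (m * p) \<le> r powr p"
    using assms by (simp add: powr_mult powr_powr)
  then have "c * (k powr p * s powr (m * p)) \<le> \<Psi>r"
    using \<Psi>r \<open>0 < c\<close> by (meson mult_left_mono less_imp_le order.trans)
  have "s powr (lam + m * (p - 1)) = s powr (lam - 1) * s powr (m * p) / s powr (m - 1)"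
    using \<open>0 < s\<close> by (simp add: powr_add[symmetric] powr_diff[symmetric] algebra_simps)
  then have "lam * c * k powr p / (2 * A) * s powr (lam + m * (p - 1))
      = lam * s powr (lam - 1) * (c * (k powr p * s powr (m * p))) / (2 * A * s powr (m - 1))"
    by simp
  also have "\<dots> \<le> lam * s powr (lam - 1) * \<Psi>r / (2 * A * s powr (m - 1))"
    using \<open>c * (k powr p * s powr (m * p)) \<le> \<Psi>r\<close> assms
    by (intro divide_right_mono mult_left_mono) auto
  also have "\<dots> \<le> lam * s powr (lam - 1) * \<Psi>r / d"
    using \<open>c * (k powr p * s powr (m * p)) \<le> \<Psi>r\<close> assms
    by (intro divide_left_mono mult_nonneg_nonneg mult_pos_pos) (auto intro: order.trans[rotated])
  finally show ?thesis by simp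
qed

locale KP_inverse_power = KP_bounds +
  fixes \<gamma> :: "real \<Rightarrow> real"
  assumes \<gamma>_Kinf: "\<gamma> \<in> Kinf" and \<beta>_\<gamma>: "\<And>r. 0 \<le> r \<Longrightarrow> \<beta> (\<gamma> r) = r"
begin

definition lam :: real where "lam = a + 1"

definition g :: "real \<Rightarrow> real" where "g r = \<gamma> r powr lam"

definition g' :: "real \<Rightarrow> real" where "g' r = lam * \<gamma> r powr (lam - 1) / d\<beta> (\<gamma> r)"

lemma lam_ge_1: "1 \<le> lam"
  using exponents by (simp add: lam_def)

lemma g_Kinf: "g \<in> Kinf"
  unfolding g_def[abs_def] using Kinf_powr[OF \<gamma>_Kinf] lam_ge_1 by simp

lemma \<gamma>_has_deriv:
  assumes "0 < r"
  shows "(\<gamma> has_real_derivative inverse (d\<beta> (\<gamma> r))) (at r)"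
proof (rule DERIV_inverse_function[where f = \<beta> and a = 0 and b = "r + 1"])
  show "(\<beta> has_real_derivative d\<beta> (\<gamma> r)) (at (\<gamma> r))" "d\<beta> (\<gamma> r) \<noteq> 0"
    using has_deriv deriv_pos Kinf_pos[OF \<gamma>_Kinf assms] by (auto simp: less_imp_neq[symmetric])
  show "isCont \<gamma> r" using Kinf_isCont[OF \<gamma>_Kinf assms] .
qed (use assms \<beta>_\<gamma> in auto)

lemma g_has_deriv:
  assumes "0 < r"
  shows "(g has_real_derivative g' r) (at r)"
  using DERIV_fun_powr[OF \<gamma>_has_deriv[OF assms] Kinf_pos[OF \<gamma>_Kinf assms], of lam]
  unfolding g_def[abs_def] g'_def by (simp add: divide_inverse)

lemma g'_pos:
  assumes "0 < r"
  shows "0 < g' r"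
  using lam_ge_1 Kinf_pos[OF \<gamma>_Kinf assms] deriv_pos[OF Kinf_pos[OF \<gamma>_Kinf assms]]
  unfolding g'_def by simp

(* Near 0, d\<beta> s \<ge> k s powr (a - 1) makes g' r of order \<gamma> r: this is what the choice lam = a + 1 buys. *)
lemma g'_bounded: "\<exists>B. \<forall>r. 0 < r \<and> r \<le> M \<longrightarrow> g' r \<le> B"
proof -
  define G where "G s = lam * s powr (lam - 1) / d\<beta> s" for s
  define S where "S = max (\<gamma> M) \<delta>"
  have G_cont: "continuous_on {\<delta>..S} G"
  proof -
    have "continuous_on {\<delta>..S} d\<beta>"
      by (rule continuous_on_subset[OF deriv_cont]) (use constants in auto)
    then show ?thesis
      unfolding G_def using constants deriv_pos by (intro continuous_intros) (auto simp: less_imp_neq[symmetric])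
  qed
  then obtain B where B: "\<And>s. s \<in> {\<delta>..S} \<Longrightarrow> G s \<le> B"
    using continuous_attains_sup[OF compact_Icc _ G_cont] by (force simp: S_def)
  have "g' r \<le> max (lam / k) B" if r: "0 < r" "r \<le> M" for r
  proof -
    define s where "s = \<gamma> r"
    have "0 < s" unfolding s_def using Kinf_pos[OF \<gamma>_Kinf r(1)] .
    show ?thesis
    proof (cases "s \<le> \<delta>")
      case True
      have "g' r \<le> lam * s powr (lam - 1) / (k * s powr (a - 1))"
        unfolding g'_def s_def[symmetric]
        using deriv_lower[OF \<open>0 < s\<close> True] deriv_pos[OF \<open>0 < s\<close>] constants \<open>0 < s\<close> lam_ge_1
        by (intro divide_left_mono) auto
      also have "\<dots> = lam / k * s powr ((lam - 1) - (a - 1))"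
        using \<open>0 < s\<close> by (simp add: powr_diff)
      also have "\<dots> = lam / k * s"
        using \<open>0 < s\<close> by (simp add: lam_def)
      also have "\<dots> \<le> lam / k"
        using True constants lam_ge_1 by (intro mult_left_le) auto
      finally show ?thesis by simp
    next
      case False
      moreover have "s \<le> S" unfolding s_def S_def using Kinf_mono[OF \<gamma>_Kinf, of r M] r by auto
      ultimately have "G s \<le> B" using B by auto
      then show ?thesis unfolding g'_def G_def s_def by simp
    qed
  qed
  then show ?thesis by blast
qed

lemma g_lipschitz: "\<exists>L. L-lipschitz_on {0..M} g"
proof (cases "0 < M")
  case True
  obtain B where B: "\<And>r. 0 < r \<Longrightarrow> r \<le> M \<Longrightarrow> g' r \<le> B" using g'_bounded by blast
  have "B-lipschitz_on {0..M} g"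
  proof (rule lipschitz_on_Icc_deriv_bound[OF True _ g_has_deriv])
    show "continuous_on {0..M} g"
      using g_Kinf unfolding Kinf_def by (auto intro: continuous_on_subset)
    show "\<bar>g' r\<bar> \<le> B" if "0 < r" "r < M" for r using B[of r] g'_pos[of r] that by simp
  qed
  then show ?thesis by blast
next
  case False
  then have "{0..M} \<subseteq> {0}" by auto
  then show ?thesis by (meson lipschitz_on_singleton lipschitz_on_subset order_refl)
qed

lemma g'_mult_lower_bound_le_1:
  assumes "0 < r" "\<gamma> r \<le> 1" "0 < c" "0 < p" "c * r powr p \<le> \<Psi>r"
  shows "lam * c * k powr p / (2 * A) * \<gamma> r powr (lam + a * (p - 1)) \<le> g' r * \<Psi>r"
proof -
  define s where "s = \<gamma> r"
  have "0 < s" unfolding s_def using Kinf_pos[OF \<gamma>_Kinf \<open>0 < r\<close>] .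
  have "s powr (b - 1) \<le> s powr (a - 1)"
    using assms(2) \<open>0 < s\<close> exponents unfolding s_def by (intro powr_mono') auto
  then have "A * s powr (b - 1) \<le> A * s powr (a - 1)" using constants by (intro mult_left_mono) auto
  then have "d\<beta> s \<le> 2 * A * s powr (a - 1)"
    using deriv_upper[OF \<open>0 < s\<close>] by (simp add: distrib_left mult.assoc)
  moreover have "k * s powr a \<le> r"
    using lower_le_1[OF \<open>0 < s\<close>] assms(1,2) \<beta>_\<gamma> unfolding s_def by simp
  ultimately show ?thesis
    unfolding g'_def s_def[symmetric] using assms constants lam_ge_1 \<open>0 < s\<close> deriv_pos[OF \<open>0 < s\<close>]
    by (intro power_gain_lower_bound) auto
qed

lemma g'_mult_lower_bound_ge_1:
  assumes "0 < r" "1 \<le> \<gamma> r" "0 < c" "0 < p" "c * r powr p \<le> \<Psi>r"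
  shows "lam * c * k powr p / (2 * A) * \<gamma> r powr (lam + b * (p - 1)) \<le> g' r * \<Psi>r"
proof -
  define s where "s = \<gamma> r"
  have "0 < s" unfolding s_def using Kinf_pos[OF \<gamma>_Kinf \<open>0 < r\<close>] .
  have "s powr (a - 1) \<le> s powr (b - 1)"
    using assms(2) \<open>0 < s\<close> exponents unfolding s_def by (intro powr_mono) auto
  then have "A * s powr (a - 1) \<le> A * s powr (b - 1)" using constants by (intro mult_left_mono) auto
  then have "d\<beta> s \<le> 2 * A * s powr (b - 1)"
    using deriv_upper[OF \<open>0 < s\<close>] by (simp add: distrib_left mult.assoc)
  moreover have "k * s powr b \<le> r"
    using lower_ge_1[OF assms(2)] \<beta>_\<gamma>[of r] assms(1) unfolding s_def by simp
  ultimately show ?thesis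
    unfolding g'_def s_def[symmetric] using assms constants lam_ge_1 \<open>0 < s\<close> deriv_pos[OF \<open>0 < s\<close>]
    by (intro power_gain_lower_bound) auto
qed

lemma g_decay:
  assumes "\<Psi> \<in> KFxT"
  shows "\<exists>\<Psi>'\<in>KFxT. \<forall>r>0. \<Psi>' (g r) \<le> g' r * \<Psi> r"
proof -
  obtain c1 c2 p1 p2 where cp: "0 < c1" "0 < c2" "0 < p1" "p1 < 1" "1 < p2"
    and \<Psi>: "\<And>s. 0 \<le> s \<Longrightarrow> \<Psi> s = c1 * s powr p1 + c2 * s powr p2"
    using assms unfolding KFxT_def by blast
  define e1 where "e1 = lam + a * (p1 - 1)"
  define e2 where "e2 = lam + b * (p2 - 1)"
  define K1 where "K1 = lam * c1 * k powr p1 / (2 * A)"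
  define K2 where "K2 = lam * c2 * k powr p2 / (2 * A)"
  define c where "c = min K1 K2 / 2"
  have "0 < a * p1" "a * p1 < a" "0 < b * (p2 - 1)"
    using exponents cp by (auto intro: mult_pos_pos mult_strict_left_mono[of p1 1 a, simplified])
  then have e: "0 < e1" "e1 < lam" "lam < e2"
    unfolding e1_def e2_def lam_def by (auto simp: algebra_simps)
  have "0 < K1" "0 < K2" unfolding K1_def K2_def using lam_ge_1 cp constants by auto
  then have "0 < c" "2 * c \<le> K1" "2 * c \<le> K2" unfolding c_def by auto
  have key: "c * (g r powr (e1 / lam) + g r powr (e2 / lam)) \<le> g' r * \<Psi> r" if "0 < r" for r
  proof -
    define s where "s = \<gamma> r"
    have "0 < s" unfolding s_def using Kinf_pos[OF \<gamma>_Kinf \<open>0 < r\<close>] .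
    have g_powr: "g r powr (e / lam) = s powr e" for e
      unfolding g_def s_def using lam_ge_1 by (simp add: powr_powr)
    have \<Psi>_ge: "c1 * r powr p1 \<le> \<Psi> r" "c2 * r powr p2 \<le> \<Psi> r"
      using \<Psi>[of r] \<open>0 < r\<close> cp by auto
    show ?thesis
    proof (cases "s \<le> 1")
      case True
      have "K1 * s powr e1 \<le> g' r * \<Psi> r"
        unfolding K1_def e1_def s_def using g'_mult_lower_bound_le_1 \<open>0 < r\<close> True cp \<Psi>_ge(1) s_def by simp
      moreover have "c * s powr e2 \<le> c * s powr e1"
        using True \<open>0 < s\<close> \<open>0 < c\<close> e by (intro mult_left_mono powr_mono') auto
      moreover have "2 * c * s powr e1 \<le> K1 * s powr e1"
        using \<open>2 * c \<le> K1\<close> by (intro mult_right_mono) auto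
      ultimately show ?thesis unfolding g_powr by (simp add: distrib_left)
    next
      case False
      have "K2 * s powr e2 \<le> g' r * \<Psi> r"
        unfolding K2_def e2_def s_def using g'_mult_lower_bound_ge_1 \<open>0 < r\<close> False cp \<Psi>_ge(2) s_def by simp
      moreover have "c * s powr e1 \<le> c * s powr e2"
        using False \<open>0 < s\<close> \<open>0 < c\<close> e by (intro mult_left_mono powr_mono) auto
      moreover have "2 * c * s powr e2 \<le> K2 * s powr e2"
        using \<open>2 * c \<le> K2\<close> by (intro mult_right_mono) auto
      ultimately show ?thesis unfolding g_powr by (simp add: distrib_left)
    qed
  qed
  have "(\<lambda>w. c * w powr (e1 / lam) + c * w powr (e2 / lam)) \<in> KFxT"
    unfolding KFxT_def using \<open>0 < c\<close> e lam_ge_1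
    by (intro CollectI exI[of _ c] exI[of _ "e1 / lam"] exI[of _ "e2 / lam"]) auto
  with key show ?thesis by (intro bexI[of _ "\<lambda>w. c * w powr (e1 / lam) + c * w powr (e2 / lam)"])
    (auto simp: algebra_simps)
qed

end

theorem lemma8:
  fixes f :: "real^'n \<Rightarrow> real^'m \<Rightarrow> real^'n"
    and V :: "real^'n \<Rightarrow> real" and \<gamma> :: "real \<Rightarrow> real"
  assumes "continuous_on UNIV (\<lambda>(x, u). f x u)"
    and "f 0 0 = 0"
    and "FxT_ISS_Lyap f V"
    and "\<gamma> \<in> KPinv"
  shows "\<exists>lam::real. lam \<ge> 1 \<and> FxT_ISS_Lyap f (\<lambda>x. (\<gamma> (V x)) powr lam)"
proof -
  obtain \<beta> where \<beta>: "\<beta> \<in> KP" and \<gamma>: "\<gamma> \<in> Kinf" "\<And>r. 0 \<le> r \<Longrightarrow> \<beta> (\<gamma> r) = r"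
    using assms(4) unfolding KPinv_def by blast
  obtain d\<beta> a b A k \<delta> where bounds: "KP_bounds \<beta> d\<beta> a b A k \<delta>"
    using KP_bounds_exist[OF \<beta>] by blast
  interpret KP_inverse_power \<beta> d\<beta> a b A k \<delta> \<gamma>
    by (rule KP_inverse_power.intro[OF bounds KP_inverse_power_axioms.intro[OF \<gamma>]])
  have "FxT_ISS_Lyap f (\<lambda>x. g (V x))"
    using assms(3,2) g_Kinf g_lipschitz g_has_deriv g'_pos g_decay by (rule FxT_ISS_Lyap_compose)
  then show ?thesis
    using lam_ge_1 unfolding g_def by blast
qed

end
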